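(* Let $\Gamma=(V,E)$ be a finite directed graph with $[n]\subseteq V$, let $w:E\to\mathbb{R}$ be edge weights with no directed cycle of negative total weight, and let $S_1\subset\dots\subset S_s$ be subsets of $V$ with $|S_j|=d_j$, $d_1<\dots<d_s$, such that for each $j$ there is some subset of $[n]$ with a linking onto $S_j$. For $I\in\binom{[n]}{d_j}$ let $\mu_j(I)$ be the minimum weight of a linking from $I$ onto $S_j$ ($\infty$ if none exists). Then $(\mu_1,\dots,\mu_s)$ is a valuated flag matroid of rank $(d_1,\dots,d_s)$.
   Context: A linking from $I$ onto $J$ ($|I|=|J|$) is a collection of $|I|$ pairwise vertex-disjoint directed paths (paths of length 0 allowed), each starting at a vertex of $I$ and ending at a vertex of $J$; its weight is the total weight of its edges. A valuated matroid of rank $d$ on $[n]$ is $\mu:\binom{[n]}{d}\to\mathbb{R}\cup\{\infty\}$, not identically $\infty$, such that for all $S\in\binom{[n]}{d-1}$, $T\in\binom{[n]}{d+1}$ the minimum of $\mu(S\cup t)+\mu(T\setminus t)$, $t\in T\setminus S$, is attained at least twice or is $\infty$. A valuated flag matroid of rank $(d_1,\dots,d_s)$ is a tuple of valuated matroids $\mu_j$ of rank $d_j$ such that for all $j<k$, $S\in\binom{[n]}{d_j-1}$, $T\in\binom{[n]}{d_k+1}$, the minimum of $\mu_j(S\cup t)+\mu_k(T\setminus t)$, $t\in T\setminus S$, is attained at least twice or is $\infty$. *)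

theory Defs
  imports "Graph_Theory.Graph_Theory" "HOL-Library.Extended_Real"
begin

text \<open>The ground set is [n] = {1..n}; vertices of the graph have type nat so that
  [n] is literally a subset of the vertex set.\<close>

definition is_linking ::
  "('a, 'b) pre_digraph \<Rightarrow> 'a set \<Rightarrow> 'a set \<Rightarrow> ('a \<Rightarrow> 'b list) \<Rightarrow> ('a \<Rightarrow> 'a) \<Rightarrow> bool" where
  "is_linking G I J P f \<longleftrightarrow>
     card I = card J \<and>
     (\<forall>i\<in>I. pre_digraph.apath G i (P i) (f i) \<and> f i \<in> J) \<and>
     (\<forall>i\<in>I. \<forall>i'\<in>I. i \<noteq> i' \<longrightarrow>
        set (pre_digraph.awalk_verts G i (P i)) \<inter> set (pre_digraph.awalk_verts G i' (P i')) = {})"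

definition linking_weight :: "('b \<Rightarrow> real) \<Rightarrow> 'a set \<Rightarrow> ('a \<Rightarrow> 'b list) \<Rightarrow> real" where
  "linking_weight w I P = (\<Sum>i\<in>I. sum_list (map w (P i)))"

definition has_linking :: "('a, 'b) pre_digraph \<Rightarrow> 'a set \<Rightarrow> 'a set \<Rightarrow> bool" where
  "has_linking G I J \<longleftrightarrow> (\<exists>P f. is_linking G I J P f)"

definition min_linking_weight ::
  "('a, 'b) pre_digraph \<Rightarrow> ('b \<Rightarrow> real) \<Rightarrow> 'a set \<Rightarrow> 'a set \<Rightarrow> ereal" where
  "min_linking_weight G w J I =
     Inf {ereal (linking_weight w I P) | P f. is_linking G I J P f}"

definition min_twice_or_inf :: "('x \<Rightarrow> ereal) \<Rightarrow> 'x set \<Rightarrow> bool" where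
  "min_twice_or_inf g X \<longleftrightarrow>
     (\<forall>t\<in>X. g t = \<infinity>) \<or>
     (\<exists>t1\<in>X. \<exists>t2\<in>X. t1 \<noteq> t2 \<and> g t1 = g t2 \<and> (\<forall>t\<in>X. g t1 \<le> g t))"

definition valuated_matroid :: "nat \<Rightarrow> nat \<Rightarrow> (nat set \<Rightarrow> ereal) \<Rightarrow> bool" where
  "valuated_matroid n d \<mu> \<longleftrightarrow>
     (\<exists>B. B \<subseteq> {1..n} \<and> card B = d \<and> \<mu> B \<noteq> \<infinity>) \<and>
     (\<forall>S T. S \<subseteq> {1..n} \<and> card S + 1 = d \<and> T \<subseteq> {1..n} \<and> card T = d + 1 \<longrightarrow>
        min_twice_or_inf (\<lambda>t. \<mu> (insert t S) + \<mu> (T - {t})) (T - S))"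

text \<open>Flag of s valuated matroids, indexed 0..s-1, with ranks d 0, ..., d (s-1).\<close>
definition valuated_flag_matroid ::
  "nat \<Rightarrow> nat \<Rightarrow> (nat \<Rightarrow> nat) \<Rightarrow> (nat \<Rightarrow> nat set \<Rightarrow> ereal) \<Rightarrow> bool" where
  "valuated_flag_matroid n s d \<mu> \<longleftrightarrow>
     (\<forall>j<s. valuated_matroid n (d j) (\<mu> j)) \<and>
     (\<forall>j k S T. j < k \<and> k < s \<and> S \<subseteq> {1..n} \<and> card S + 1 = d j \<and>
        T \<subseteq> {1..n} \<and> card T = d k + 1 \<longrightarrow>
        min_twice_or_inf (\<lambda>t. \<mu> j (insert t S) + \<mu> k (T - {t})) (T - S))"

end

theory Submission
  imports Defs "HOL-Library.FuncSet" "HOL-Combinatorics.Transposition"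
begin

text \<open>A linking from A onto J gives a bijection \<sigma> from V - J onto V - A of the same weight
  that fixes every vertex or moves it along a single arc: \<sigma> sends each vertex of a path to
  its successor and fixes all vertices off the paths. Conversely every such bijection yields a
  linking of at most its weight, since a bijection of V - J onto itself decomposes into closed
  walks, which have nonnegative weight when no cycle is negative. Hence \<mu>_J(A) is the least
  weight of such a bijection.

  For J \<subseteq> K let t0 \<in> T - S minimise \<mu>_J(S \<union> {t}) + \<mu>_K(T - {t}), and take optimal
  bijections V - J \<rightarrow> V - (S \<union> {t0}) and V - K \<rightarrow> V - (T - {t0}). Every vertex of V - K has
  a partner in both; swapping the two partners of the vertices on the alternating path that
  starts at t0 gives bijections for some other t1 \<in> T - S with the same total weight, so the
  minimum is attained at t1 as well.\<close>

section \<open>Alternating paths\<close>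

lemma bij_betw_fun_upd:
  assumes "bij_betw f X Y" "x \<in> X" "y \<notin> Y - {f x}"
  shows "bij_betw (f(x := y)) X (insert y (Y - {f x}))"
  using assms unfolding bij_betw_def inj_on_def by (auto simp: image_iff)

lemma bij_betw_fun_upd_insert:
  assumes "bij_betw f X Y" "x \<notin> X" "y \<notin> Y"
  shows "bij_betw (f(x := y)) (insert x X) (insert y Y)"
  using assms unfolding bij_betw_def inj_on_def by (auto simp: image_iff)

lemma bij_betw_remove:
  assumes "bij_betw f X Y" "x \<in> X"
  shows "bij_betw f (X - {x}) (Y - {f x})"
  using assms unfolding bij_betw_def inj_on_def by (auto simp: image_iff)

text \<open>Follow the alternating path t0 = s2 y1, s1 y1 = s2 y2, s1 y2 = s2 y3, ... and swap the
  two partners of every y on it; the path ends at the first s1 y outside Q.\<close>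
lemma alternating_path_swap:
  assumes "finite Y" "Y \<subseteq> X" "t0 \<in> P" "t0 \<notin> Q"
    and "bij_betw s1 X (P - {t0})" "bij_betw s2 Y (insert t0 Q)"
  shows "\<exists>t1 Z. t1 \<in> P - Q - {t0} \<and> Z \<subseteq> Y
    \<and> bij_betw (\<lambda>x. if x \<in> Z then s2 x else s1 x) X (P - {t1})
    \<and> bij_betw (\<lambda>y. if y \<in> Z then s1 y else s2 y) Y (insert t1 Q)"
  using assms
proof (induction "card Y" arbitrary: X Y P Q t0 rule: less_induct)
  case less
  obtain y where y: "y \<in> Y" "s2 y = t0"
    using less.prems(6) by (metis bij_betw_imp_surj_on imageE insertI1)
  have yX: "y \<in> X" using y less.prems(2) by auto
  define c where "c = s1 y"
  have c: "c \<in> P - {t0}" using less.prems(5) yX unfolding c_def bij_betw_def by auto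
  have s1_rest: "bij_betw s1 (X - {y}) (P - {t0} - {c})"
    using bij_betw_remove[OF less.prems(5) yX] unfolding c_def .
  have s2_rest: "bij_betw s2 (Y - {y}) Q"
    using bij_betw_remove[OF less.prems(6) y(1)] y(2) less.prems(4) by simp
  show ?case
  proof (cases "c \<in> Q")
    case False
    have "bij_betw (s1(y := t0)) X (insert t0 (P - {t0} - {c}))"
      using bij_betw_fun_upd[OF less.prems(5) yX] unfolding c_def by simp
    moreover have "bij_betw (s2(y := c)) Y (insert c Q)"
      using bij_betw_fun_upd[OF less.prems(6) y(1), of c] y(2) less.prems(4) False c by simp
    moreover have "insert t0 (P - {t0} - {c}) = P - {c}" using less.prems(3) c by auto
    moreover have "s1(y := t0) = (\<lambda>x. if x \<in> {y} then s2 x else s1 x)"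
      "s2(y := c) = (\<lambda>x. if x \<in> {y} then s1 x else s2 x)"
      using y(2) unfolding c_def by auto
    ultimately show ?thesis using False c y(1) by (intro exI[of _ c] exI[of _ "{y}"]) auto
  next
    case True
    have "card (Y - {y}) < card Y" using less.prems(1) y(1) by (rule card_Diff1_less)
    moreover have "bij_betw s2 (Y - {y}) (insert c (Q - {c}))" using s2_rest True by (simp add: insert_absorb)
    ultimately obtain t1 Z where t1: "t1 \<in> P - {t0} - (Q - {c}) - {c}" and Z: "Z \<subseteq> Y - {y}"
      and bij1: "bij_betw (\<lambda>x. if x \<in> Z then s2 x else s1 x) (X - {y}) (P - {t0} - {t1})"
      and bij2: "bij_betw (\<lambda>x. if x \<in> Z then s1 x else s2 x) (Y - {y}) (insert t1 (Q - {c}))"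
      using less.hyps[of "Y - {y}" "X - {y}" c "P - {t0}" "Q - {c}"] less.prems(1,2) s1_rest c True
      by blast
    have "bij_betw ((\<lambda>x. if x \<in> Z then s2 x else s1 x)(y := t0)) (insert y (X - {y}))
        (insert t0 (P - {t0} - {t1}))"
      by (rule bij_betw_fun_upd_insert[OF bij1]) auto
    moreover have "bij_betw ((\<lambda>x. if x \<in> Z then s1 x else s2 x)(y := c)) (insert y (Y - {y}))
        (insert c (insert t1 (Q - {c})))"
      by (rule bij_betw_fun_upd_insert[OF bij2]) (use t1 in auto)
    moreover have "insert y (X - {y}) = X" "insert y (Y - {y}) = Y"
      "insert t0 (P - {t0} - {t1}) = P - {t1}" "insert c (insert t1 (Q - {c})) = insert t1 Q"
      using yX y(1) less.prems(3) t1 True by auto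
    moreover have "(\<lambda>x. if x \<in> Z then s2 x else s1 x)(y := t0) = (\<lambda>x. if x \<in> insert y Z then s2 x else s1 x)"
      "(\<lambda>x. if x \<in> Z then s1 x else s2 x)(y := c) = (\<lambda>x. if x \<in> insert y Z then s1 x else s2 x)"
      using y(2) unfolding c_def by auto
    ultimately show ?thesis using t1 Z y(1) True by (intro exI[of _ t1] exI[of _ "insert y Z"]) auto
  qed
qed

lemma sum_swap:
  fixes a b :: "'a \<Rightarrow> 'b::comm_monoid_add"
  assumes "finite X" "Z \<subseteq> Y" "Y \<subseteq> X"
  shows "(\<Sum>x\<in>X. if x \<in> Z then b x else a x) + (\<Sum>y\<in>Y. if y \<in> Z then a y else b y)
    = sum a X + sum b Y"
proof -
  have "finite Y" using assms(1,3) by (rule finite_subset[rotated])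
  moreover have "X \<inter> Z = Z" "Y \<inter> Z = Z" using assms(2,3) by auto
  ultimately show ?thesis
    using assms sum.subset_diff[of Z X a] sum.subset_diff[of Z Y b]
    by (simp add: sum.If_cases Diff_eq ac_simps)
qed

section \<open>Closed walks and permutations\<close>

context wf_digraph
begin

lemma closed_walk_weight_nonneg:
  fixes w :: "'b \<Rightarrow> real"
  assumes cycle_nonneg: "\<And>c. cycle c \<Longrightarrow> 0 \<le> sum_list (map w c)"
    and "awalk u p u"
  shows "0 \<le> sum_list (map w p)"
  using assms(2)
proof (induction "length p" arbitrary: u p rule: less_induct)
  case less
  show ?case
  proof (cases "distinct (tl (awalk_verts u p))")
    case True
    then show ?thesis
      using less.prems cycle_nonneg unfolding cycle_def by (cases "p = []") auto
  next
    case False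
    then obtain e es where p: "p = e # es" using less.prems by (cases p) auto
    with False less.prems have e: "e \<in> arcs G" "tail G e = u"
      and "awalk (head G e) es u" "\<not> distinct (awalk_verts (head G e) es)"
      by (auto simp: awalk_Cons_iff)
    then obtain q r s x where es: "es = q @ r @ s" "r \<noteq> []"
      "awalk (head G e) q x" "awalk x r x" "awalk x s u"
      using awalk_not_distinct_decomp by blast
    have "awalk u (e # q @ s) u" using e es by (auto simp: awalk_Cons_iff)
    then have "0 \<le> sum_list (map w (e # q @ s))" using less.hyps[of "e # q @ s" u] p es by simp
    moreover have "0 \<le> sum_list (map w r)" using less.hyps[of r x] p es by simp
    ultimately show ?thesis using p es by simp
  qed
qed

text \<open>Merging the walk into v with the walk out of v turns v into a fixed point; once
  all points are fixed, every walk is closed.\<close>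
lemma permutation_walks_weight_nonneg:
  fixes w :: "'b \<Rightarrow> real"
  assumes cycle_nonneg: "\<And>c. cycle c \<Longrightarrow> 0 \<le> sum_list (map w c)"
    and "finite M" "bij_betw \<sigma> M M" "\<forall>v\<in>M. awalk v (p v) (\<sigma> v)"
  shows "0 \<le> (\<Sum>v\<in>M. sum_list (map w (p v)))"
  using assms(3,4)
proof (induction "card {v\<in>M. \<sigma> v \<noteq> v}" arbitrary: \<sigma> p rule: less_induct)
  case less
  show ?case
  proof (cases "\<forall>v\<in>M. \<sigma> v = v")
    case True
    then show ?thesis
      using less.prems(2) closed_walk_weight_nonneg[OF cycle_nonneg] by (metis sum_nonneg)
  next
    case False
    then obtain v where v: "v \<in> M" "\<sigma> v \<noteq> v" by blast
    then obtain x where x: "x \<in> M" "\<sigma> x = v"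
      using less.prems(1) by (metis bij_betw_imp_surj_on imageE)
    have xv: "x \<noteq> v" using x v by auto
    have \<sigma>vM: "\<sigma> v \<in> M" using less.prems(1) v(1) by (meson bij_betwE)
    have inj: "\<sigma> y \<noteq> \<sigma> z" if "y \<in> M" "z \<in> M" "y \<noteq> z" for y z
      using less.prems(1) that by (metis bij_betw_iff_bijections)
    define \<sigma>' where "\<sigma>' = transpose v (\<sigma> v) \<circ> \<sigma>"
    define p' where "p' = p(x := p x @ p v, v := [])"
    have \<sigma>': "\<sigma>' x = \<sigma> v" "\<sigma>' v = v" "\<And>y. y \<notin> {x, v} \<Longrightarrow> y \<in> M \<Longrightarrow> \<sigma>' y = \<sigma> y"
      using x v inj unfolding \<sigma>'_def by (auto simp: transpose_def)
    have "bij_betw \<sigma>' M M"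
      unfolding \<sigma>'_def using less.prems(1) v(1) \<sigma>vM by (auto intro: bij_betw_trans)
    moreover have "\<forall>y\<in>M. awalk y (p' y) (\<sigma>' y)"
    proof
      fix y assume "y \<in> M"
      have "awalk x (p x @ p v) (\<sigma> v)" using less.prems(2) x v by (metis awalk_appendI)
      moreover have "awalk v [] v" using less.prems(2) v by (metis awalk_Nil_iff awalk_hd_in_verts)
      ultimately show "awalk y (p' y) (\<sigma>' y)"
        using \<open>y \<in> M\<close> less.prems(2) xv \<sigma>' unfolding p'_def by auto
    qed
    moreover have "{y\<in>M. \<sigma>' y \<noteq> y} \<subseteq> {y\<in>M. \<sigma> y \<noteq> y} - {v}"
    proof
      fix y assume "y \<in> {y\<in>M. \<sigma>' y \<noteq> y}"
      then show "y \<in> {y\<in>M. \<sigma> y \<noteq> y} - {v}" using \<sigma>' x xv by (cases "y = x"; cases "y = v") auto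
    qed
    then have "card {y\<in>M. \<sigma>' y \<noteq> y} < card {y\<in>M. \<sigma> y \<noteq> y}"
      using assms(2) v by (intro psubset_card_mono) auto
    ultimately have "0 \<le> (\<Sum>y\<in>M. sum_list (map w (p' y)))"
      by (intro less.hyps) auto
    also have "(\<Sum>y\<in>M. sum_list (map w (p' y))) = (\<Sum>y\<in>M. sum_list (map w (p y)))"
      using assms(2) x v xv unfolding p'_def
      by (simp add: sum.remove sum.remove[of "M - {x}" v] cong: sum.cong_simp)
    finally show ?thesis .
  qed
qed

end

section \<open>Linkings and arc matchings\<close>

definition linking_verts :: "('a, 'b) pre_digraph \<Rightarrow> 'a set \<Rightarrow> ('a \<Rightarrow> 'b list) \<Rightarrow> 'a set" where
  "linking_verts G A P = (\<Union>a\<in>A. set (pre_digraph.awalk_verts G a (P a)))"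

context fin_digraph
begin

lemma is_linkingD:
  assumes "is_linking G A J P f"
  shows "card A = card J" "\<And>i. i \<in> A \<Longrightarrow> apath i (P i) (f i)" "\<And>i. i \<in> A \<Longrightarrow> f i \<in> J"
    "\<And>i i'. i \<in> A \<Longrightarrow> i' \<in> A \<Longrightarrow> i \<noteq> i'
      \<Longrightarrow> set (awalk_verts i (P i)) \<inter> set (awalk_verts i' (P i')) = {}"
  using assms unfolding is_linking_def by auto

lemma linking_target_on_path:
  assumes "is_linking G A J P f" "a \<in> A"
  shows "f a \<in> set (awalk_verts a (P a))"
  using is_linkingD(2)[OF assms] unfolding apath_def by (metis awalkE' last_in_set awalk_verts_non_Nil)

lemma linking_verts_bounds:
  assumes "is_linking G A J P f"
  shows "A \<subseteq> linking_verts G A P" "f ` A \<subseteq> linking_verts G A P" "linking_verts G A P \<subseteq> verts G"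
  using is_linkingD(2)[OF assms] linking_target_on_path[OF assms]
  unfolding linking_verts_def apath_def by (auto intro: hd_in_awalk_verts(1) elim: awalkE')

lemma linking_sources_finite:
  assumes "is_linking G A J P f"
  shows "finite A"
  using linking_verts_bounds(1,3)[OF assms] by (rule finite_subset[OF order_trans finite_verts])

lemma linking_targets_eq:
  assumes lnk: "is_linking G A J P f" and "finite J"
  shows "f ` A = J"
proof -
  have "inj_on f A"
    using is_linkingD(4)[OF lnk] linking_target_on_path[OF lnk] unfolding inj_on_def by (metis disjoint_iff)
  moreover have "f ` A \<subseteq> J" "card A = card J" using is_linkingD[OF lnk] by auto
  ultimately show ?thesis using \<open>finite J\<close> by (metis card_image card_subset_eq)
qed

lemma is_linking_trivial:
  assumes "A \<subseteq> verts G"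
  shows "is_linking G A A (\<lambda>_. []) id" "linking_verts G A (\<lambda>_. []) = A"
    "linking_weight w A (\<lambda>_. []) = 0"
  using assms by (auto simp: is_linking_def linking_verts_def linking_weight_def apath_Nil_iff)

lemma is_linking_drop_arc:
  assumes lnk: "is_linking G A J P f" and a: "a \<in> A" "P a = e # p"
  defines "u \<equiv> head G e"
  shows "u \<notin> A" "is_linking G (insert u (A - {a})) J (P(u := p)) (f(u := f a))"
    "linking_verts G (insert u (A - {a})) (P(u := p)) = linking_verts G A P - {a}"
    "linking_weight w A P = w e + linking_weight w (insert u (A - {a})) (P(u := p))"
proof -
  note L = is_linkingD[OF lnk]
  have path: "tail G e = a" "apath u p (f a)" "a \<notin> set (awalk_verts u p)"
    using L(2)[OF a(1)] a(2) unfolding u_def by (auto simp: apath_Cons_iff)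
  have verts_a: "set (awalk_verts a (P a)) = insert a (set (awalk_verts u p))"
    using a(2) path(1) u_def by simp
  have off_a: "set (awalk_verts i (P i)) \<inter> set (awalk_verts a (P a)) = {}" if "i \<in> A - {a}" for i
    using L(4) a(1) that by blast
  have u_on_p: "u \<in> set (awalk_verts u p)" using path(2) by (rule hd_in_awalk_verts(2))
  show uA: "u \<notin> A"
  proof
    assume uA: "u \<in> A"
    have "u \<noteq> a" using u_on_p path(3) by auto
    moreover have "u \<in> set (awalk_verts u (P u))" using L(2)[OF uA] by (rule hd_in_awalk_verts(2))
    ultimately show False using off_a[of u] uA verts_a u_on_p by auto
  qed
  have finA: "finite A" using lnk by (rule linking_sources_finite)
  show "is_linking G (insert u (A - {a})) J (P(u := p)) (f(u := f a))"
    unfolding is_linking_def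
  proof (intro conjI ballI impI)
    have "card (insert u (A - {a})) = card A"
      using card_Suc_Diff1[OF finA a(1)] uA finA by simp
    then show "card (insert u (A - {a})) = card J" using L(1) by simp
    fix i assume "i \<in> insert u (A - {a})"
    then show "apath i ((P(u := p)) i) ((f(u := f a)) i)" "(f(u := f a)) i \<in> J"
      using L(2,3) a(1) path(2) uA by auto
  next
    fix i i' assume i: "i \<in> insert u (A - {a})" and i': "i' \<in> insert u (A - {a})" and "i \<noteq> i'"
    then consider "i = u" "i' \<in> A - {a}" | "i' = u" "i \<in> A - {a}" | "i \<in> A - {a}" "i' \<in> A - {a}"
      by blast
    then show "set (awalk_verts i ((P(u := p)) i)) \<inter> set (awalk_verts i' ((P(u := p)) i')) = {}"
    proof cases
      case 1
      then show ?thesis using off_a[of i'] verts_a uA by auto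
    next
      case 2
      then show ?thesis using off_a[of i] verts_a uA by auto
    next
      case 3
      then show ?thesis using L(4) \<open>i \<noteq> i'\<close> uA by auto
    qed
  qed
  have "linking_verts G (insert u (A - {a})) (P(u := p))
      = set (awalk_verts u p) \<union> (\<Union>i\<in>A - {a}. set (awalk_verts i (P i)))"
  proof -
    have "(P(u := p)) i = P i" if "i \<in> A" for i using uA that by auto
    then show ?thesis unfolding linking_verts_def by (auto simp del: fun_upd_apply simp add: fun_upd_same)
  qed
  moreover have "linking_verts G A P = set (awalk_verts a (P a)) \<union> (\<Union>i\<in>A - {a}. set (awalk_verts i (P i)))"
    using a(1) unfolding linking_verts_def by blast
  moreover have "a \<notin> set (awalk_verts i (P i))" if "i \<in> A - {a}" for i
    using off_a[OF that] verts_a by auto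
  ultimately show "linking_verts G (insert u (A - {a})) (P(u := p)) = linking_verts G A P - {a}"
    using verts_a path(3) by auto
  have "(\<Sum>i\<in>A - {a}. sum_list (map w ((P(u := p)) i))) = (\<Sum>i\<in>A - {a}. sum_list (map w (P i)))"
    using uA by (intro sum.cong) auto
  then show "linking_weight w A P = w e + linking_weight w (insert u (A - {a})) (P(u := p))"
    using finA a uA unfolding linking_weight_def by (simp add: sum.remove)
qed

lemma is_linking_add_arc:
  assumes lnk: "is_linking G A J P f" and uA: "u \<in> A"
    and arc: "e \<in> arcs G" "tail G e = v" "head G e = u" and v: "v \<notin> linking_verts G A P"
  shows "is_linking G (insert v (A - {u})) J (P(v := e # P u)) (f(v := f u))"
    "linking_verts G (insert v (A - {u})) (P(v := e # P u)) = insert v (linking_verts G A P)"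
    "linking_weight w (insert v (A - {u})) (P(v := e # P u)) = w e + linking_weight w A P"
proof -
  note L = is_linkingD[OF lnk]
  have vA: "v \<notin> A" using v linking_verts_bounds(1)[OF lnk] by auto
  have v_off: "v \<notin> set (awalk_verts i (P i))" if "i \<in> A" for i
    using v that unfolding linking_verts_def by auto
  have verts_v: "set (awalk_verts v (e # P u)) = insert v (set (awalk_verts u (P u)))"
    using arc by simp
  have finA: "finite A" using lnk by (rule linking_sources_finite)
  show "is_linking G (insert v (A - {u})) J (P(v := e # P u)) (f(v := f u))"
    unfolding is_linking_def
  proof (intro conjI ballI impI)
    have "card (insert v (A - {u})) = card A"
      using card_Suc_Diff1[OF finA uA] vA finA by simp
    then show "card (insert v (A - {u})) = card J" using L(1) by simp
    fix i assume "i \<in> insert v (A - {u})"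
    then show "apath i ((P(v := e # P u)) i) ((f(v := f u)) i)" "(f(v := f u)) i \<in> J"
      using L(2,3) uA arc v_off vA by (auto simp: apath_Cons_iff)
  next
    fix i i' assume "i \<in> insert v (A - {u})" "i' \<in> insert v (A - {u})" "i \<noteq> i'"
    then consider "i = v" "i' \<in> A - {u}" "i' \<noteq> v" | "i' = v" "i \<in> A - {u}" "i \<noteq> v"
      | "i \<in> A - {u}" "i' \<in> A - {u}" "i \<noteq> v" "i' \<noteq> v"
      using vA by blast
    then show "set (awalk_verts i ((P(v := e # P u)) i))
        \<inter> set (awalk_verts i' ((P(v := e # P u)) i')) = {}"
    proof cases
      case 1
      then show ?thesis using L(4)[OF uA, of i'] verts_v v_off by auto
    next
      case 2
      then show ?thesis using L(4)[OF uA, of i] verts_v v_off by auto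
    next
      case 3
      then show ?thesis using L(4) \<open>i \<noteq> i'\<close> by auto
    qed
  qed
  have "(P(v := e # P u)) i = P i" if "i \<in> A" for i using vA that by auto
  then have "linking_verts G (insert v (A - {u})) (P(v := e # P u))
      = set (awalk_verts v (e # P u)) \<union> (\<Union>i\<in>A - {u}. set (awalk_verts i (P i)))"
    unfolding linking_verts_def by (auto simp del: fun_upd_apply simp add: fun_upd_same)
  moreover have "linking_verts G A P = set (awalk_verts u (P u)) \<union> (\<Union>i\<in>A - {u}. set (awalk_verts i (P i)))"
    using uA unfolding linking_verts_def by blast
  ultimately show "linking_verts G (insert v (A - {u})) (P(v := e # P u)) = insert v (linking_verts G A P)"
    using verts_v by auto
  have "(\<Sum>i\<in>A - {u}. sum_list (map w ((P(v := e # P u)) i))) = (\<Sum>i\<in>A - {u}. sum_list (map w (P i)))"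
    using vA by (intro sum.cong) auto
  then show "linking_weight w (insert v (A - {u})) (P(v := e # P u)) = w e + linking_weight w A P"
    using finA uA vA unfolding linking_weight_def by (simp add: sum.remove)
qed

end

definition arc_or_stay :: "('a, 'b) pre_digraph \<Rightarrow> 'a \<Rightarrow> 'a \<Rightarrow> 'b \<Rightarrow> bool" where
  "arc_or_stay G v u e \<longleftrightarrow> u \<noteq> v \<longrightarrow> e \<in> arcs G \<and> tail G e = v \<and> head G e = u"

definition matching_weight :: "('b \<Rightarrow> real) \<Rightarrow> 'a set \<Rightarrow> ('a \<Rightarrow> 'a) \<Rightarrow> ('a \<Rightarrow> 'b) \<Rightarrow> real" where
  "matching_weight w X \<sigma> e = (\<Sum>v\<in>X. if \<sigma> v = v then 0 else w (e v))"

lemma matching_weight_fun_upd: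
  assumes "finite X" "v \<in> X"
  shows "matching_weight w X (\<sigma>(v := u)) (e(v := a))
    = matching_weight w X \<sigma> e - (if \<sigma> v = v then 0 else w (e v)) + (if u = v then 0 else w a)"
  using assms unfolding matching_weight_def by (simp add: sum.remove cong: sum.cong_simp if_cong)

context fin_digraph
begin

lemma matching_weight_permutation_nonneg:
  fixes w :: "'b \<Rightarrow> real"
  assumes cycle_nonneg: "\<And>c. cycle c \<Longrightarrow> 0 \<le> sum_list (map w c)"
    and "X \<subseteq> verts G" "bij_betw \<sigma> X X" "\<forall>v\<in>X. arc_or_stay G v (\<sigma> v) (e v)"
  shows "0 \<le> matching_weight w X \<sigma> e"
proof -
  have "0 \<le> (\<Sum>v\<in>X. sum_list (map w (if \<sigma> v = v then [] else [e v])))"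
  proof (rule permutation_walks_weight_nonneg[OF cycle_nonneg _ assms(3)])
    show "finite X" using assms(2) finite_verts by (rule finite_subset)
    show "\<forall>v\<in>X. awalk v (if \<sigma> v = v then [] else [e v]) (\<sigma> v)"
      using assms(2,4) bij_betwE[OF assms(3)] unfolding arc_or_stay_def by (auto simp: awalk_simps)
  qed
  also have "\<dots> = matching_weight w X \<sigma> e"
    unfolding matching_weight_def by (rule sum.cong) auto
  finally show ?thesis .
qed

lemma linking_to_matching:
  assumes "is_linking G A J P f" "J \<subseteq> verts G"
  shows "\<exists>\<sigma> e. bij_betw \<sigma> (verts G - J) (verts G - A)
    \<and> (\<forall>v\<in>verts G - J. arc_or_stay G v (\<sigma> v) (e v))
    \<and> matching_weight w (verts G - J) \<sigma> e = linking_weight w A P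
    \<and> (\<forall>v\<in>verts G - linking_verts G A P. \<sigma> v = v)"
  using assms(1)
proof (induction "card (linking_verts G A P)" arbitrary: A P f rule: less_induct)
  case less
  have finJ: "finite J" using assms(2) finite_verts by (rule finite_subset)
  show ?case
  proof (cases "\<forall>a\<in>A. P a = []")
    case True
    then have "\<forall>a\<in>A. f a = a" using is_linkingD(2)[OF less.prems] by (auto simp: apath_Nil_iff)
    then have "J = A" using linking_targets_eq[OF less.prems finJ] by auto
    then show ?thesis using True
      by (intro exI[of _ id] exI[of _ undefined])
        (auto simp: arc_or_stay_def matching_weight_def linking_weight_def)
  next
    case False
    then obtain a e p where a: "a \<in> A" "P a = e # p" by (metis neq_Nil_conv)
    define u where "u = head G e"
    define A' where "A' = insert u (A - {a})"
    note drop = is_linking_drop_arc[OF less.prems a, folded u_def, folded A'_def]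
    have path: "e \<in> arcs G" "tail G e = a" "u \<noteq> a"
      using is_linkingD(2)[OF less.prems a(1)] a drop(1) by (auto simp: apath_Cons_iff u_def)
    have a_on: "a \<in> linking_verts G A P" using linking_verts_bounds(1)[OF less.prems] a(1) by auto
    have "finite (linking_verts G A P)"
      using linking_verts_bounds(3)[OF less.prems] finite_verts by (rule finite_subset)
    then have "card (linking_verts G A' (P(u := p))) < card (linking_verts G A P)"
      unfolding drop(3) using a_on by (rule card_Diff1_less)
    then obtain \<sigma>' e' where IH: "bij_betw \<sigma>' (verts G - J) (verts G - A')"
      "\<forall>v\<in>verts G - J. arc_or_stay G v (\<sigma>' v) (e' v)"
      "matching_weight w (verts G - J) \<sigma>' e' = linking_weight w A' (P(u := p))"
      "\<forall>v\<in>verts G - linking_verts G A' (P(u := p)). \<sigma>' v = v"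
      using less.hyps drop(2) by blast
    have aV: "a \<in> verts G" using a_on linking_verts_bounds(3)[OF less.prems] by auto
    have aJ: "a \<notin> J"
      using linking_targets_eq[OF drop(2) finJ] linking_verts_bounds(2)[OF drop(2)] unfolding drop(3) by auto
    have \<sigma>'a: "\<sigma>' a = a" using IH(4) aV unfolding drop(3) by auto
    have uV: "u \<in> verts G" using path(1) unfolding u_def by simp
    have "bij_betw (\<sigma>'(a := u)) (verts G - J) (insert u ((verts G - A') - {\<sigma>' a}))"
      using aV aJ by (intro bij_betw_fun_upd[OF IH(1)]) (auto simp: A'_def)
    moreover have "insert u ((verts G - A') - {\<sigma>' a}) = verts G - A"
      using \<sigma>'a uV drop(1) a(1) path(3) unfolding A'_def by auto
    moreover have "\<forall>v\<in>verts G - J. arc_or_stay G v ((\<sigma>'(a := u)) v) ((e'(a := e)) v)"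
      using IH(2) path unfolding arc_or_stay_def u_def by auto
    moreover have "matching_weight w (verts G - J) (\<sigma>'(a := u)) (e'(a := e)) = linking_weight w A P"
      using matching_weight_fun_upd[of "verts G - J" a w \<sigma>' u e' e] aV aJ \<sigma>'a path(3) IH(3) drop(4)
      by simp
    moreover have "\<forall>v\<in>verts G - linking_verts G A P. (\<sigma>'(a := u)) v = v"
      using IH(4) a_on unfolding drop(3) by auto
    ultimately show ?thesis by metis
  qed
qed

text \<open>The bound on the vertices of the linking keeps v off the linking built for
  insert (\<sigma> v) (A - {v}), so that the arc from v to \<sigma> v can be prepended.\<close>
lemma matching_to_linking:
  fixes w :: "'b \<Rightarrow> real"
  assumes cycle_nonneg: "\<And>c. cycle c \<Longrightarrow> 0 \<le> sum_list (map w c)" and J: "J \<subseteq> verts G"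
    and "A \<subseteq> verts G" "card A = card J" "bij_betw \<sigma> (verts G - J) (verts G - A)"
    and "\<forall>v\<in>verts G - J. arc_or_stay G v (\<sigma> v) (e v)"
  shows "\<exists>P f. is_linking G A J P f \<and> linking_weight w A P \<le> matching_weight w (verts G - J) \<sigma> e
    \<and> linking_verts G A P \<subseteq> A \<union> J \<union> {v\<in>verts G - J. \<sigma> v \<noteq> v}"
  using assms(3-6)
proof (induction "card {v\<in>verts G - J. \<sigma> v \<noteq> v}" arbitrary: A \<sigma> rule: less_induct)
  case less
  have finJ: "finite J" using J finite_verts by (rule finite_subset)
  show ?case
  proof (cases "A \<subseteq> J")
    case True
    then have AJ: "A = J" using less.prems(2) finJ by (metis card_subset_eq)
    have "0 \<le> matching_weight w (verts G - J) \<sigma> e"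
      using less.prems(3,4) AJ by (intro matching_weight_permutation_nonneg[OF cycle_nonneg]) auto
    then show ?thesis
      using is_linking_trivial(1,2)[OF less.prems(1)] is_linking_trivial(3)[OF less.prems(1), of w] AJ
      by (intro exI[of _ "\<lambda>_. []"] exI[of _ id]) auto
  next
    case False
    then obtain v where v: "v \<in> A" "v \<notin> J" by auto
    have vVJ: "v \<in> verts G - J" using v less.prems(1) by auto
    define u where "u = \<sigma> v"
    have uVA: "u \<in> verts G - A" using less.prems(3) vVJ unfolding u_def by (meson bij_betwE)
    then have uv: "u \<noteq> v" using v by auto
    have arc: "e v \<in> arcs G" "tail G (e v) = v" "head G (e v) = u"
      using less.prems(4) vVJ uv unfolding arc_or_stay_def u_def by auto
    define A' where "A' = insert u (A - {v})"
    have "bij_betw (\<sigma>(v := v)) (verts G - J) (insert v ((verts G - A) - {\<sigma> v}))"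
      using v by (intro bij_betw_fun_upd[OF less.prems(3) vVJ]) auto
    moreover have "insert v ((verts G - A) - {\<sigma> v}) = verts G - A'"
      unfolding A'_def u_def[symmetric] using vVJ v uVA by auto
    ultimately have bij': "bij_betw (\<sigma>(v := v)) (verts G - J) (verts G - A')" by simp
    have "card {x\<in>verts G - J. (\<sigma>(v := v)) x \<noteq> x} < card {x\<in>verts G - J. \<sigma> x \<noteq> x}"
      using vVJ uv unfolding u_def by (intro psubset_card_mono) auto
    moreover have "A' \<subseteq> verts G" using less.prems(1) uVA unfolding A'_def by auto
    moreover have "card A' = card J"
    proof -
      have "finite A" using less.prems(1) finite_verts by (rule finite_subset)
      then show ?thesis using card_Suc_Diff1[OF _ v(1)] uVA less.prems(2) unfolding A'_def by simp
    qed
    moreover have "\<forall>x\<in>verts G - J. arc_or_stay G x ((\<sigma>(v := v)) x) (e x)"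
      using less.prems(4) unfolding arc_or_stay_def by auto
    ultimately obtain P f where IH: "is_linking G A' J P f"
      "linking_weight w A' P \<le> matching_weight w (verts G - J) (\<sigma>(v := v)) e"
      "linking_verts G A' P \<subseteq> A' \<union> J \<union> {x\<in>verts G - J. (\<sigma>(v := v)) x \<noteq> x}"
      using less.hyps bij' by blast
    have "v \<notin> linking_verts G A' P" using IH(3) uv v(2) unfolding A'_def by auto
    moreover have "u \<in> A'" "insert v (A' - {u}) = A" using v(1) uVA unfolding A'_def by auto
    ultimately have lnk: "is_linking G A J (P(v := e v # P u)) (f(v := f u))"
      and verts: "linking_verts G A (P(v := e v # P u)) = insert v (linking_verts G A' P)"
      and weight: "linking_weight w A (P(v := e v # P u)) = w (e v) + linking_weight w A' P"
      using is_linking_add_arc[OF IH(1) _ arc] by metis+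
    have "u \<in> A \<union> J \<union> {x\<in>verts G - J. \<sigma> x \<noteq> x}"
    proof (cases "u \<in> J")
      case False
      have "\<sigma> u \<noteq> u"
        using less.prems(3) vVJ uVA False uv unfolding u_def bij_betw_def inj_on_def by auto
      then show ?thesis using uVA False by auto
    qed auto
    then have "A' \<union> J \<union> {x\<in>verts G - J. (\<sigma>(v := v)) x \<noteq> x} \<subseteq> A \<union> J \<union> {x\<in>verts G - J. \<sigma> x \<noteq> x}"
      unfolding A'_def by auto
    then have "linking_verts G A (P(v := e v # P u)) \<subseteq> A \<union> J \<union> {x\<in>verts G - J. \<sigma> x \<noteq> x}"
      unfolding verts using subset_trans[OF IH(3)] v(1) by blast
    moreover have "matching_weight w (verts G - J) (\<sigma>(v := v)) e
        = matching_weight w (verts G - J) \<sigma> e - w (e v)"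
      using matching_weight_fun_upd[of "verts G - J" v w \<sigma> v e "e v"] vVJ uv unfolding u_def by simp
    ultimately show ?thesis
      using lnk weight IH(2) by (intro exI[of _ "P(v := e v # P u)"] exI[of _ "f(v := f u)"]) auto
  qed
qed

lemma matching_exchange:
  assumes JK: "J \<subseteq> K" "K \<subseteq> verts G" and T: "T \<subseteq> verts G" and t0: "t0 \<in> T - S"
    and M1: "bij_betw \<sigma>1 (verts G - J) (verts G - insert t0 S)"
      "\<forall>v\<in>verts G - J. arc_or_stay G v (\<sigma>1 v) (e1 v)"
    and M2: "bij_betw \<sigma>2 (verts G - K) (verts G - (T - {t0}))"
      "\<forall>v\<in>verts G - K. arc_or_stay G v (\<sigma>2 v) (e2 v)"
  obtains t1 \<sigma>1' e1' \<sigma>2' e2' where "t1 \<in> T - S" "t1 \<noteq> t0"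
    "bij_betw \<sigma>1' (verts G - J) (verts G - insert t1 S)"
    "\<forall>v\<in>verts G - J. arc_or_stay G v (\<sigma>1' v) (e1' v)"
    "bij_betw \<sigma>2' (verts G - K) (verts G - (T - {t1}))"
    "\<forall>v\<in>verts G - K. arc_or_stay G v (\<sigma>2' v) (e2' v)"
    "matching_weight w (verts G - J) \<sigma>1' e1' + matching_weight w (verts G - K) \<sigma>2' e2'
      = matching_weight w (verts G - J) \<sigma>1 e1 + matching_weight w (verts G - K) \<sigma>2 e2"
proof -
  have "verts G - insert t0 S = verts G - S - {t0}" "verts G - (T - {t0}) = insert t0 (verts G - T)"
    using t0 T by auto
  then have bij: "bij_betw \<sigma>1 (verts G - J) (verts G - S - {t0})"
    "bij_betw \<sigma>2 (verts G - K) (insert t0 (verts G - T))"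
    using M1(1) M2(1) by simp_all
  have sets: "finite (verts G - K)" "verts G - K \<subseteq> verts G - J" "t0 \<in> verts G - S" "t0 \<notin> verts G - T"
    using JK t0 T by auto
  obtain t1 Z where t1: "t1 \<in> verts G - S - (verts G - T) - {t0}" and Z: "Z \<subseteq> verts G - K"
    and swapped: "bij_betw (\<lambda>x. if x \<in> Z then \<sigma>2 x else \<sigma>1 x) (verts G - J) (verts G - S - {t1})"
      "bij_betw (\<lambda>x. if x \<in> Z then \<sigma>1 x else \<sigma>2 x) (verts G - K) (insert t1 (verts G - T))"
    using alternating_path_swap[OF sets bij] by blast
  have "verts G - S - {t1} = verts G - insert t1 S" "insert t1 (verts G - T) = verts G - (T - {t1})"
    using t1 T by auto
  note swapped = swapped[unfolded this]
  have "matching_weight w X (\<lambda>x. if x \<in> Z then \<sigma> x else \<sigma>' x) (\<lambda>x. if x \<in> Z then e x else e' x)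
      = (\<Sum>v\<in>X. if v \<in> Z then (if \<sigma> v = v then 0 else w (e v)) else (if \<sigma>' v = v then 0 else w (e' v)))"
    for X \<sigma> \<sigma>' e e' unfolding matching_weight_def by (rule sum.cong) auto
  moreover have "(\<Sum>v\<in>verts G - J. if v \<in> Z then (if \<sigma>2 v = v then 0 else w (e2 v)) else (if \<sigma>1 v = v then 0 else w (e1 v)))
      + (\<Sum>v\<in>verts G - K. if v \<in> Z then (if \<sigma>1 v = v then 0 else w (e1 v)) else (if \<sigma>2 v = v then 0 else w (e2 v)))
      = matching_weight w (verts G - J) \<sigma>1 e1 + matching_weight w (verts G - K) \<sigma>2 e2"
    unfolding matching_weight_def using Z sets(2) by (intro sum_swap) auto
  ultimately have weight: "matching_weight w (verts G - J) (\<lambda>x. if x \<in> Z then \<sigma>2 x else \<sigma>1 x) (\<lambda>x. if x \<in> Z then e2 x else e1 x)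
      + matching_weight w (verts G - K) (\<lambda>x. if x \<in> Z then \<sigma>1 x else \<sigma>2 x) (\<lambda>x. if x \<in> Z then e1 x else e2 x)
      = matching_weight w (verts G - J) \<sigma>1 e1 + matching_weight w (verts G - K) \<sigma>2 e2"
    by presburger
  have "\<forall>v\<in>verts G - J. arc_or_stay G v (if v \<in> Z then \<sigma>2 v else \<sigma>1 v) (if v \<in> Z then e2 v else e1 v)"
    "\<forall>v\<in>verts G - K. arc_or_stay G v (if v \<in> Z then \<sigma>1 v else \<sigma>2 v) (if v \<in> Z then e1 v else e2 v)"
    using M1(2) M2(2) Z sets(2) by auto
  moreover have "t1 \<in> T - S" "t1 \<noteq> t0" using t1 by auto
  ultimately show ?thesis using that[OF _ _ swapped(1) _ swapped(2) _ weight] by blast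
qed

end

section \<open>Minimum weight linkings\<close>

lemma min_linking_weight_le:
  "is_linking G I J P f \<Longrightarrow> min_linking_weight G w J I \<le> ereal (linking_weight w I P)"
  unfolding min_linking_weight_def by (rule Inf_lower) blast

lemma min_linking_weight_eq_infinity_iff:
  "min_linking_weight G w J I = \<infinity> \<longleftrightarrow> \<not> has_linking G I J"
proof
  assume "min_linking_weight G w J I = \<infinity>"
  then show "\<not> has_linking G I J"
    unfolding has_linking_def using min_linking_weight_le[of G I J _ _ w] by force
next
  assume "\<not> has_linking G I J"
  then show "min_linking_weight G w J I = \<infinity>"
    unfolding min_linking_weight_def has_linking_def by (simp add: top_ereal_def)
qed

context fin_digraph
begin

lemma min_linking_weight_attained:
  assumes "has_linking G I J"
  obtains P f where "is_linking G I J P f" "min_linking_weight G w J I = ereal (linking_weight w I P)"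
proof -
  define W where "W = {ereal (linking_weight w I P) | P f. is_linking G I J P f}"
  define B where "B = {p. set p \<subseteq> arcs G \<and> length p \<le> card (verts G)}"
  obtain P0 f0 where lnk0: "is_linking G I J P0 f0" using assms unfolding has_linking_def by blast
  have "W \<subseteq> (\<lambda>Q. ereal (linking_weight w I Q)) ` (PiE I (\<lambda>_. B))"
  proof
    fix x assume "x \<in> W"
    then obtain P f where x: "x = ereal (linking_weight w I P)" "is_linking G I J P f"
      unfolding W_def by blast
    have "restrict P I \<in> PiE I (\<lambda>_. B)"
      using is_linkingD(2)[OF x(2)] length_apath unfolding B_def by (auto simp: apath_def)
    moreover have "linking_weight w I P = linking_weight w I (restrict P I)"
      unfolding linking_weight_def by (rule sum.cong) auto
    ultimately show "x \<in> (\<lambda>Q. ereal (linking_weight w I Q)) ` (PiE I (\<lambda>_. B))" using x(1) by auto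
  qed
  moreover have "finite B" unfolding B_def using finite_lists_length_le[OF finite_arcs] by simp
  ultimately have "finite W" using linking_sources_finite[OF lnk0] by (meson finite_PiE finite_imageI finite_subset)
  moreover have "W \<noteq> {}" using lnk0 unfolding W_def by blast
  ultimately have "Inf W \<in> W" by (metis cInf_eq_Min Min_in)
  then show ?thesis using that unfolding W_def min_linking_weight_def by auto
qed

lemma min_linking_weight_matching:
  assumes "J \<subseteq> verts G" "min_linking_weight G w J A \<noteq> \<infinity>"
  obtains \<sigma> e where "bij_betw \<sigma> (verts G - J) (verts G - A)"
    "\<forall>v\<in>verts G - J. arc_or_stay G v (\<sigma> v) (e v)"
    "min_linking_weight G w J A = ereal (matching_weight w (verts G - J) \<sigma> e)"
proof -
  obtain P f where "is_linking G A J P f" "min_linking_weight G w J A = ereal (linking_weight w A P)"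
    using assms(2) min_linking_weight_attained unfolding min_linking_weight_eq_infinity_iff by blast
  then show ?thesis using that linking_to_matching[OF _ assms(1)] by metis
qed

lemma min_linking_weight_le_matching_weight:
  fixes w :: "'b \<Rightarrow> real"
  assumes "\<And>c. cycle c \<Longrightarrow> 0 \<le> sum_list (map w c)" and "J \<subseteq> verts G" "A \<subseteq> verts G"
    and "card A = card J" "bij_betw \<sigma> (verts G - J) (verts G - A)"
    and "\<forall>v\<in>verts G - J. arc_or_stay G v (\<sigma> v) (e v)"
  shows "min_linking_weight G w J A \<le> ereal (matching_weight w (verts G - J) \<sigma> e)"
  using matching_to_linking[OF assms] min_linking_weight_le by (meson ereal_less_eq(3) order_trans)

lemma min_linking_weight_exchange:
  fixes w :: "'b \<Rightarrow> real"
  assumes cycle_nonneg: "\<And>c. cycle c \<Longrightarrow> 0 \<le> sum_list (map w c)"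
    and JK: "J \<subseteq> K" "K \<subseteq> verts G" and S: "S \<subseteq> verts G" and T: "T \<subseteq> verts G"
    and card: "card S + 1 = card J" "card T = card K + 1"
  shows "min_twice_or_inf
    (\<lambda>t. min_linking_weight G w J (insert t S) + min_linking_weight G w K (T - {t})) (T - S)"
proof -
  define g where "g t = min_linking_weight G w J (insert t S) + min_linking_weight G w K (T - {t})" for t
  have J: "J \<subseteq> verts G" using JK by auto
  have finT: "finite T" and finS: "finite S" using T S finite_verts finite_subset by blast+
  show ?thesis
  proof (cases "\<forall>t\<in>T - S. g t = \<infinity>")
    case True
    then show ?thesis unfolding min_twice_or_inf_def g_def by blast
  next
    case False
    then obtain t0 where t0: "t0 \<in> T - S" "\<forall>t\<in>T - S. g t0 \<le> g t"
      using ex_is_arg_min_if_finite[of "T - S" g] finT unfolding is_arg_min_linorder by blast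
    then have "g t0 \<noteq> \<infinity>" using False by (metis ereal_infty_less_eq(1))
    then have "min_linking_weight G w J (insert t0 S) \<noteq> \<infinity>" "min_linking_weight G w K (T - {t0}) \<noteq> \<infinity>"
      unfolding g_def by auto
    then have fin: "min_linking_weight G w J (insert t0 S) \<noteq> \<infinity>"
      "min_linking_weight G w K (T - {t0}) \<noteq> \<infinity>"
      unfolding g_def by auto
    obtain \<sigma>1 e1 where M1: "bij_betw \<sigma>1 (verts G - J) (verts G - insert t0 S)"
      "\<forall>v\<in>verts G - J. arc_or_stay G v (\<sigma>1 v) (e1 v)"
      "min_linking_weight G w J (insert t0 S) = ereal (matching_weight w (verts G - J) \<sigma>1 e1)"
      using min_linking_weight_matching[OF J fin(1)] by blast
    obtain \<sigma>2 e2 where M2: "bij_betw \<sigma>2 (verts G - K) (verts G - (T - {t0}))"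
      "\<forall>v\<in>verts G - K. arc_or_stay G v (\<sigma>2 v) (e2 v)"
      "min_linking_weight G w K (T - {t0}) = ereal (matching_weight w (verts G - K) \<sigma>2 e2)"
      using min_linking_weight_matching[OF JK(2) fin(2)] by blast
    obtain t1 \<sigma>1' e1' \<sigma>2' e2' where t1: "t1 \<in> T - S" "t1 \<noteq> t0"
      and M1': "bij_betw \<sigma>1' (verts G - J) (verts G - insert t1 S)"
        "\<forall>v\<in>verts G - J. arc_or_stay G v (\<sigma>1' v) (e1' v)"
      and M2': "bij_betw \<sigma>2' (verts G - K) (verts G - (T - {t1}))"
        "\<forall>v\<in>verts G - K. arc_or_stay G v (\<sigma>2' v) (e2' v)"
      and weight: "matching_weight w (verts G - J) \<sigma>1' e1' + matching_weight w (verts G - K) \<sigma>2' e2'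
        = matching_weight w (verts G - J) \<sigma>1 e1 + matching_weight w (verts G - K) \<sigma>2 e2"
      using matching_exchange[OF JK T t0(1) M1(1,2) M2(1,2)] by blast
    have "card (insert t1 S) = card J" "card (T - {t1}) = card K"
      using card t1 finS finT by auto
    then have "g t1 \<le> ereal (matching_weight w (verts G - J) \<sigma>1' e1') + ereal (matching_weight w (verts G - K) \<sigma>2' e2')"
      unfolding g_def using M1' M2' S T J JK(2) t1(1)
      by (intro add_mono min_linking_weight_le_matching_weight[OF cycle_nonneg]) auto
    also have "\<dots> = g t0" unfolding g_def M1(3) M2(3) using weight by simp
    finally have "g t1 \<le> g t0" .
    then have "g t1 = g t0" using t0(2) t1(1) by (meson antisym)
    then show ?thesis unfolding min_twice_or_inf_def g_def[symmetric] using t0 t1 by metis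
  qed
qed

end

lemma subset_chain_le:
  fixes S :: "nat \<Rightarrow> 'a set"
  assumes "\<And>i. Suc i < s \<Longrightarrow> S i \<subseteq> S (Suc i)" "j \<le> k" "k < s"
  shows "S j \<subseteq> S k"
  using assms(2,3)
proof (induction k)
  case (Suc k)
  then show ?case using assms(1)[of k] by (cases "j = Suc k") auto
qed simp

theorem theorem7p1:
  fixes G :: "(nat, 'b) pre_digraph" and w :: "'b \<Rightarrow> real"
    and n s :: nat and d :: "nat \<Rightarrow> nat" and S :: "nat \<Rightarrow> nat set"
  assumes "fin_digraph G"
    and "{1..n} \<subseteq> verts G"
    and "\<And>p. pre_digraph.cycle G p \<Longrightarrow> sum_list (map w p) \<ge> 0"
    and "\<And>j. j < s \<Longrightarrow> S j \<subseteq> verts G"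
    and "\<And>j. Suc j < s \<Longrightarrow> S j \<subset> S (Suc j)"
    and "\<And>j. j < s \<Longrightarrow> card (S j) = d j"
    and "\<And>j. Suc j < s \<Longrightarrow> d j < d (Suc j)"
    and "\<And>j. j < s \<Longrightarrow> \<exists>I. I \<subseteq> {1..n} \<and> has_linking G I (S j)"
  shows "valuated_flag_matroid n s d (\<lambda>j. min_linking_weight G w (S j))"
proof -
  interpret fin_digraph G by fact
  txt \<open>Only the inclusions S j \<subseteq> S k are used.\<close>
  have exchange: "min_twice_or_inf
      (\<lambda>t. min_linking_weight G w (S j) (insert t X) + min_linking_weight G w (S k) (T - {t})) (T - X)"
    if "j \<le> k" "k < s" "X \<subseteq> {1..n}" "card X + 1 = d j" "T \<subseteq> {1..n}" "card T = d k + 1" for j k X T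
  proof (rule min_linking_weight_exchange[OF assms(3)])
    show "S j \<subseteq> S k" using subset_chain_le[of s S j k] assms(5) that(1,2) by blast
  qed (use that assms(2,4,6) in auto)
  have basis: "\<exists>B. B \<subseteq> {1..n} \<and> card B = d j \<and> min_linking_weight G w (S j) B \<noteq> \<infinity>"
    if j: "j < s" for j
  proof -
    obtain I P f where "I \<subseteq> {1..n}" "is_linking G I (S j) P f"
      using assms(8)[OF j] unfolding has_linking_def by blast
    then show ?thesis
      using assms(6)[OF j] min_linking_weight_eq_infinity_iff unfolding has_linking_def is_linking_def
      by metis
  qed
  show ?thesis
    unfolding valuated_flag_matroid_def valuated_matroid_def
    using basis exchange by (blast intro: less_imp_le)
qed

end
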